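(* Let $\bm{A}=[\bm{A}_1\ \bm{A}_2]$ have full column rank with $\bm{A}_j^\top\bm{A}_j=\bm{I}_j$ and $\bm{C}:=\bm{A}_2^\top\bm{A}_1\ne0$. Let $\gamma_1^*:=\dfrac{2}{1+\sqrt{1-\lambda_1(\bm{C}\bm{C}^\top)}}$. Then $\gamma_1^*-1<\rho(\bm{M}(1,1))$ and $\min_{\gamma_1>0}\rho(\bm{M}(\gamma_1,\gamma_1))=\rho(\bm{M}(\gamma_1^*,\gamma_1^* ))=\gamma_1^*-1.$
   Context: $\rho$: spectral radius; $\lambda_1$: largest eigenvalue. $\bm{M}(\gamma_1,\gamma_2)=\begin{bmatrix}(1-\gamma_1)\bm{I}_1&-\gamma_1\bm{C}^\top\\-\gamma_2(1-\gamma_1)\bm{C}&(1-\gamma_2)\bm{I}_2+\gamma_1\gamma_2\bm{C}\bm{C}^\top\end{bmatrix}$, the two-block gradient descent iteration matrix with stepsizes $\gamma_1,\gamma_2$. *)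

theory Defs
  imports "Jordan_Normal_Form.Spectral_Radius"
begin

definition hcat :: "real mat \<Rightarrow> real mat \<Rightarrow> real mat" where
  "hcat A1 A2 = mat (dim_row A1) (dim_col A1 + dim_col A2)
     (\<lambda>(i,j). if j < dim_col A1 then A1 $$ (i,j) else A2 $$ (i, j - dim_col A1))"

definition full_column_rank :: "real mat \<Rightarrow> bool" where
  "full_column_rank A \<longleftrightarrow>
     (\<forall>x \<in> carrier_vec (dim_col A). A *\<^sub>v x = 0\<^sub>v (dim_row A) \<longrightarrow> x = 0\<^sub>v (dim_col A))"

definition lambda_max :: "real mat \<Rightarrow> real" where
  "lambda_max S = Max {x. eigenvalue S x}"

definition rho :: "real mat \<Rightarrow> real" where
  "rho M = spectral_radius (map_mat complex_of_real M)"

definition iterM :: "real mat \<Rightarrow> real \<Rightarrow> real \<Rightarrow> real mat" where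
  "iterM C g1 g2 = (let n1 = dim_col C; n2 = dim_row C in
     four_block_mat
       ((1 - g1) \<cdot>\<^sub>m 1\<^sub>m n1)             (- g1 \<cdot>\<^sub>m transpose_mat C)
       (- (g2 * (1 - g1)) \<cdot>\<^sub>m C)         ((1 - g2) \<cdot>\<^sub>m 1\<^sub>m n2 + (g1 * g2) \<cdot>\<^sub>m (C * transpose_mat C)))"

end

(* With equal step sizes w, an eigenvector (x, y) of M(w, w) has C^T y proportional to x, and
   its eigenvalue lam is 1 - w, 0, or a root of (lam + w - 1)^2 = w^2 t lam for an eigenvalue t
   of C C^T; conversely every such root with lam + w - 1 <> 0 is an eigenvalue.  When
   w^2 t <= 4 (w - 1) the two roots are complex conjugate or double, of modulus w - 1.  The step
   g = 2 / (1 + sqrt (1 - lambda_1)) is the one with g^2 lambda_1 = 4 (g - 1), hence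
   rho(M(g, g)) = g - 1.  For any w > 0, one root for t = lambda_1 has modulus at least g - 1:
   the larger real root if w <= g, and otherwise one of two roots whose product is (w - 1)^2.
   Orthonormality of the blocks and full column rank give 0 < lambda_1 < 1, and lambda_1 itself
   is an eigenvalue of M(1, 1) exceeding g - 1. *)

theory Submission
  imports Defs
begin

abbreviation cr :: "real \<Rightarrow> complex" where "cr \<equiv> complex_of_real"

section \<open>Gram matrices and their spectra\<close>

lemma real_scalar_prod_self_eq_0:
  fixes v :: "real vec"
  assumes "v \<in> carrier_vec n" and "v \<bullet> v = 0"
  shows "v = 0\<^sub>v n"
  using conjugate_square_eq_0_vec[OF assms(1)] assms(2) by simp

lemma mult_transpose_self_eq_0:
  fixes B :: "real mat"
  assumes B: "B \<in> carrier_mat n m" and "B * transpose_mat B = 0\<^sub>m n n"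
  shows "B = 0\<^sub>m n m"
proof (rule eq_matI)
  fix i j assume i: "i < dim_row (0\<^sub>m n m)" and j: "j < dim_col (0\<^sub>m n m)"
  have "row B i \<bullet> row B i = (B * transpose_mat B) $$ (i, i)" using B i by auto
  also have "\<dots> = 0" using assms(2) i by auto
  finally have "row B i = 0\<^sub>v m" by (rule real_scalar_prod_self_eq_0[rotated]) (use B in auto)
  then have "row B i $ j = 0" using j by simp
  then show "B $$ (i, j) = 0\<^sub>m n m $$ (i, j)" using B i j by simp
qed (use B in auto)

lemma symmetric_nilpotent_mat_eq_0:
  fixes S :: "real mat"
  assumes S: "S \<in> carrier_mat n n" and sym: "transpose_mat S = S"
    and nil: "S ^\<^sub>m k = 0\<^sub>m n n"
  shows "S = 0\<^sub>m n n"
proof -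
  have kernel_sq: "S *\<^sub>v u = 0\<^sub>v n" if u: "u \<in> carrier_vec n" and "S *\<^sub>v (S *\<^sub>v u) = 0\<^sub>v n" for u
  proof -
    have "(S *\<^sub>v u) \<bullet> (S *\<^sub>v u) = (transpose_mat S *\<^sub>v (S *\<^sub>v u)) \<bullet> u"
      using transpose_vec_mult_scalar[OF S u, of "S *\<^sub>v u"] S u by auto
    also have "\<dots> = 0" using that unfolding sym by simp
    finally show ?thesis by (rule real_scalar_prod_self_eq_0[rotated]) (use S u in auto)
  qed
  have kernel_pow: "S *\<^sub>v u = 0\<^sub>v n" if "u \<in> carrier_vec n" "S ^\<^sub>m Suc j *\<^sub>v u = 0\<^sub>v n" for u j
    using that
  proof (induction j arbitrary: u)
    case 0
    then show ?case using S by simp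
  next
    case (Suc j)
    have "S ^\<^sub>m Suc j *\<^sub>v (S *\<^sub>v u) = 0\<^sub>v n"
      using Suc.prems S by (metis assoc_mult_mat_vec pow_carrier_mat pow_mat.simps(2))
    then have "S *\<^sub>v (S *\<^sub>v u) = 0\<^sub>v n" using Suc.IH[of "S *\<^sub>v u"] Suc.prems(1) S by simp
    then show ?case by (rule kernel_sq[OF Suc.prems(1)])
  qed
  have "S ^\<^sub>m Suc k *\<^sub>v u = 0\<^sub>v n" if "u \<in> carrier_vec n" for u
    using nil S that by (auto intro!: eq_vecI simp: scalar_prod_def)
  then have "S *\<^sub>v unit_vec n j = 0\<^sub>v n" for j by (intro kernel_pow[of _ k]) auto
  moreover have "(S *\<^sub>v unit_vec n j) $ i = S $$ (i, j)" if "i < n" "j < n" for i j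
    using S that by simp
  ultimately show ?thesis using S by (intro eq_matI) auto
qed

lemma strictly_upper_triangular_pow_eq_0:
  fixes B :: "'a :: semiring_1 mat"
  assumes B: "B \<in> carrier_mat n n"
    and lower_zero: "\<And>i j. i < n \<Longrightarrow> j \<le> i \<Longrightarrow> B $$ (i, j) = 0"
  shows "B ^\<^sub>m n = 0\<^sub>m n n"
proof -
  have "(B ^\<^sub>m k) $$ (i, j) = 0" if "i < n" "j < n" "j < i + k" for i j k
    using that
  proof (induction k arbitrary: j)
    case 0
    then show ?case using B by auto
  next
    case (Suc k)
    have "(B ^\<^sub>m Suc k) $$ (i, j) = (\<Sum>l<n. (B ^\<^sub>m k) $$ (i, l) * B $$ (l, j))"
      using Suc.prems B by (auto simp: scalar_prod_def lessThan_atLeast0 intro!: sum.cong)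
    also have "\<dots> = 0"
    proof (intro sum.neutral ballI)
      fix l assume "l \<in> {..<n}"
      then show "(B ^\<^sub>m k) $$ (i, l) * B $$ (l, j) = 0"
        using Suc lower_zero[of l j] by (cases "l < i + k") auto
    qed
    finally show ?case .
  qed
  then show ?thesis using B by (intro eq_matI) auto
qed

lemma spectrum_zero_imp_nilpotent:
  fixes A :: "complex mat"
  assumes A: "A \<in> carrier_mat n n" and zero: "\<And>mu. eigenvalue A mu \<Longrightarrow> mu = 0"
  shows "A ^\<^sub>m n = 0\<^sub>m n n"
proof -
  obtain es where cp: "char_poly A = (\<Prod>e\<leftarrow>es. [:- e, 1:])"
    using char_poly_factorized[OF A] by blast
  have es_zero: "e = 0" if "e \<in> set es" for e
    using zero eigenvalue_root_char_poly[OF A] linear_poly_root[OF that] cp by metis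
  obtain B P Q where "schur_decomposition A es = (B, P, Q)" by (metis prod_cases3)
  from schur_decomposition[OF A cp this]
  have sim: "similar_mat_wit A B P Q" and ut: "upper_triangular B" and diag: "diag_mat B = es"
    by auto
  have PQB: "P \<in> carrier_mat n n" "Q \<in> carrier_mat n n" "B \<in> carrier_mat n n"
    using sim A unfolding similar_mat_wit_def Let_def by auto
  have "B $$ (i, i) \<in> set es" if "i < n" for i
    using that PQB unfolding diag[symmetric] diag_mat_def by auto
  then have "B ^\<^sub>m n = 0\<^sub>m n n"
    using ut PQB es_zero by (intro strictly_upper_triangular_pow_eq_0) (auto simp: le_less)
  then show ?thesis using similar_mat_wit_pow_id[OF sim, of n] PQB by simp
qed

lemma smult_vec_eq_0_iff:
  fixes a :: "'a :: {semiring_0, semiring_no_zero_divisors}"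
  assumes "v \<in> carrier_vec n"
  shows "a \<cdot>\<^sub>v v = 0\<^sub>v n \<longleftrightarrow> a = 0 \<or> v = 0\<^sub>v n"
  using assms by (auto simp: vec_eq_iff)

lemma eigenvalue_dim_pos:
  assumes "A \<in> carrier_mat n n" and "eigenvalue A t"
  shows "0 < n"
  using assms unfolding eigenvalue_def eigenvector_def by (cases n) auto

lemma eigenvalue_mult_swap:
  fixes A B :: "'a :: field mat"
  assumes A: "A \<in> carrier_mat n m" and B: "B \<in> carrier_mat m n"
    and ev: "eigenvalue (A * B) t" and t: "t \<noteq> 0"
  shows "eigenvalue (B * A) t"
proof -
  obtain x where x: "x \<in> carrier_vec n" "x \<noteq> 0\<^sub>v n" and eq: "A *\<^sub>v (B *\<^sub>v x) = t \<cdot>\<^sub>v x"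
    using ev A B unfolding eigenvalue_def eigenvector_def by auto
  have Bx: "B *\<^sub>v x \<in> carrier_vec m" using B x by simp
  have "B *\<^sub>v x \<noteq> 0\<^sub>v m"
  proof
    assume "B *\<^sub>v x = 0\<^sub>v m"
    moreover have "A *\<^sub>v 0\<^sub>v m = 0\<^sub>v n" using A by (intro eq_vecI) auto
    ultimately have "t \<cdot>\<^sub>v x = 0\<^sub>v n" using eq by simp
    then show False using t x smult_vec_eq_0_iff by blast
  qed
  moreover have "(B * A) *\<^sub>v (B *\<^sub>v x) = t \<cdot>\<^sub>v (B *\<^sub>v x)"
    using eq A B x by (simp add: mult_mat_vec)
  ultimately show ?thesis
    using Bx A B unfolding eigenvalue_def eigenvector_def by (intro exI[of _ "B *\<^sub>v x"]) auto
qed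

lemma eigenvalue_of_real_mat:
  assumes A: "A \<in> carrier_mat n n" and "eigenvalue (map_mat cr A) (cr t)"
  shows "eigenvalue A t"
proof -
  have "map_mat cr (char_matrix A t) = char_matrix (map_mat cr A) (cr t)"
    using A by (intro eq_matI) (auto simp: char_matrix_def)
  then have "cr (det (char_matrix A t)) = 0"
    using assms eigenvalue_det[of "map_mat cr A" n] by (metis of_real_hom.hom_det map_carrier_mat)
  then show ?thesis using eigenvalue_det[OF A] by simp
qed

lemma of_real_mult_transpose:
  assumes "C \<in> carrier_mat n m"
  shows "map_mat cr (C * transpose_mat C) = map_mat cr C * transpose_mat (map_mat cr C)"
  unfolding map_mat_transpose by (rule of_real_hom.mat_hom_mult) (use assms in auto)

lemma conjugate_of_real_mat_mult_vec:
  assumes B: "B \<in> carrier_mat n m" and z: "z \<in> carrier_vec m"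
  shows "map_mat cr B *\<^sub>v conjugate z = conjugate (map_mat cr B *\<^sub>v z)"
proof (rule eq_vecI)
  fix i assume "i < dim_vec (conjugate (map_mat cr B *\<^sub>v z))"
  then have i: "i < n" using B by simp
  have "conjugate (row (map_mat cr B) i) = row (map_mat cr B) i"
    using B i by (intro eq_vecI) auto
  then show "(map_mat cr B *\<^sub>v conjugate z) $ i = conjugate (map_mat cr B *\<^sub>v z) $ i"
    using conjugate_sprod_vec[of "row (map_mat cr B) i" m z] B z i by auto
qed (use B in auto)

lemma gram_eigenvalue_nonneg_real:
  fixes B :: "real mat"
  assumes B: "B \<in> carrier_mat n m" and ev: "eigenvalue (map_mat cr (B * transpose_mat B)) mu"
  shows "\<exists>t \<ge> 0. mu = cr t"
proof -
  define K where "K = map_mat cr (transpose_mat B)"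
  have K: "K \<in> carrier_mat m n" using B unfolding K_def by simp
  have "map_mat cr (B * transpose_mat B) = transpose_mat K * K"
    using of_real_mult_transpose[OF B] by (simp add: K_def map_mat_transpose)
  with ev obtain z where z: "z \<in> carrier_vec n" "z \<noteq> 0\<^sub>v n"
    and eq: "(transpose_mat K * K) *\<^sub>v z = mu \<cdot>\<^sub>v z"
    unfolding eigenvalue_def eigenvector_def using K by auto
  define u where "u = K *\<^sub>v z"
  have u: "u \<in> carrier_vec m" using K z unfolding u_def by simp
  have "mu * (z \<bullet>c z) = (transpose_mat K *\<^sub>v u) \<bullet> conjugate z"
    using eq K z unfolding u_def by auto
  also have "\<dots> = u \<bullet> (K *\<^sub>v conjugate z)"
    using transpose_vec_mult_scalar[OF K _ u, of "conjugate z"] z by simp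
  also have "K *\<^sub>v conjugate z = conjugate u"
    unfolding u_def K_def using B z by (intro conjugate_of_real_mat_mult_vec) auto
  finally have ratio: "mu * (z \<bullet>c z) = u \<bullet>c u" .
  define a b where "a = Re (z \<bullet>c z)" and "b = Re (u \<bullet>c u)"
  have "z \<bullet>c z = cr a" "a > 0"
    using conjugate_square_greater_0_vec[OF z(1)] z(2)
    by (auto simp: a_def less_complex_def complex_eq_iff)
  moreover have "u \<bullet>c u = cr b" "b \<ge> 0"
    using conjugate_square_ge_0_vec[of u] by (auto simp: b_def less_eq_complex_def complex_eq_iff)
  ultimately show ?thesis
    using ratio by (intro exI[of _ "b / a"]) (auto simp: field_simps)
qed

lemma eigenvalue_lambda_max:
  assumes A: "A \<in> carrier_mat n n" and "eigenvalue A t"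
  shows "eigenvalue A (lambda_max A)" and "t \<le> lambda_max A"
proof -
  have "finite {x. eigenvalue A x}"
    using card_finite_spectrum(1)[OF A] unfolding spectrum_def .
  then show "eigenvalue A (lambda_max A)" and "t \<le> lambda_max A"
    using assms(2) Max_in[of "{x. eigenvalue A x}"] Max_ge[of "{x. eigenvalue A x}"]
    unfolding lambda_max_def by auto
qed

lemma gram_real_eigenvalue_exists:
  fixes B :: "real mat"
  assumes B: "B \<in> carrier_mat n m" and n: "n > 0"
  shows "\<exists>t. eigenvalue (B * transpose_mat B) t"
proof -
  have S: "B * transpose_mat B \<in> carrier_mat n n" using B by simp
  obtain mu where "eigenvalue (map_mat cr (B * transpose_mat B)) mu"
    using spectrum_non_empty[of "map_mat cr (B * transpose_mat B)" n] S n
    unfolding spectrum_def by auto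
  with gram_eigenvalue_nonneg_real[OF B this] show ?thesis
    using eigenvalue_of_real_mat[OF S] by blast
qed

(* Were all eigenvalues of B B^T zero, its Schur form would make it nilpotent, and a symmetric
   nilpotent real matrix vanishes. *)
lemma lambda_max_gram_pos:
  fixes B :: "real mat"
  assumes B: "B \<in> carrier_mat n m" and nz: "B \<noteq> 0\<^sub>m n m"
  shows "lambda_max (B * transpose_mat B) > 0"
proof (rule ccontr)
  define S where "S = B * transpose_mat B"
  have S: "S \<in> carrier_mat n n" using B unfolding S_def by simp
  assume "\<not> lambda_max (B * transpose_mat B) > 0"
  then have nonpos: "t \<le> 0" if "eigenvalue S t" for t
    using eigenvalue_lambda_max(2)[OF S that] unfolding S_def by simp
  have "mu = 0" if "eigenvalue (map_mat cr S) mu" for mu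
    using gram_eigenvalue_nonneg_real[OF B that[unfolded S_def]] nonpos
      eigenvalue_of_real_mat[OF S] that by force
  then have "map_mat cr (S ^\<^sub>m n) = map_mat cr (0\<^sub>m n n)"
    using spectrum_zero_imp_nilpotent[of "map_mat cr S" n] S
    by (auto simp: of_real_hom.mat_hom_pow)
  then have "S ^\<^sub>m n = 0\<^sub>m n n" by (rule of_real_hom.mat_hom_inj)
  moreover have "transpose_mat S = S"
    using transpose_mult[OF B, of "transpose_mat B" n] B unfolding S_def by simp
  ultimately have "B * transpose_mat B = 0\<^sub>m n n"
    using symmetric_nilpotent_mat_eq_0[OF S] unfolding S_def by blast
  with mult_transpose_self_eq_0[OF B] nz show False by blast
qed

lemma lambda_max_gram:
  fixes B :: "real mat"
  assumes B: "B \<in> carrier_mat n m" and nz: "B \<noteq> 0\<^sub>m n m"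
  shows "eigenvalue (B * transpose_mat B) (lambda_max (B * transpose_mat B))"
    and "\<And>t. eigenvalue (B * transpose_mat B) t \<Longrightarrow> t \<le> lambda_max (B * transpose_mat B)"
    and "0 < lambda_max (B * transpose_mat B)"
proof -
  have S: "B * transpose_mat B \<in> carrier_mat n n" using B by simp
  have "0 < n"
  proof (rule ccontr)
    assume "\<not> 0 < n"
    then have "B = 0\<^sub>m n m" using B by (intro eq_matI) auto
    with nz show False ..
  qed
  then obtain t where "eigenvalue (B * transpose_mat B) t"
    using gram_real_eigenvalue_exists[OF B] by blast
  then show "eigenvalue (B * transpose_mat B) (lambda_max (B * transpose_mat B))"
    by (rule eigenvalue_lambda_max(1)[OF S])
  show "\<And>t. eigenvalue (B * transpose_mat B) t \<Longrightarrow> t \<le> lambda_max (B * transpose_mat B)"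
    by (rule eigenvalue_lambda_max(2)[OF S])
  show "0 < lambda_max (B * transpose_mat B)" by (rule lambda_max_gram_pos[OF B nz])
qed

section \<open>Orthonormal blocks\<close>

lemma append_vec_eq_0_iff:
  assumes "a \<in> carrier_vec n1" and "b \<in> carrier_vec n2"
  shows "a @\<^sub>v b = 0\<^sub>v (n1 + n2) \<longleftrightarrow> a = 0\<^sub>v n1 \<and> b = 0\<^sub>v n2"
proof -
  have "0\<^sub>v (n1 + n2) = 0\<^sub>v n1 @\<^sub>v (0\<^sub>v n2 :: 'a vec)" by (intro eq_vecI) auto
  then show ?thesis using assms by simp
qed

lemma scalar_prod_minus_self:
  fixes a b :: "'a :: comm_ring_1 vec"
  assumes a: "a \<in> carrier_vec n" and b: "b \<in> carrier_vec n"
  shows "(a - b) \<bullet> (a - b) = a \<bullet> a - 2 * (a \<bullet> b) + b \<bullet> b"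
  using minus_scalar_prod_distrib[OF a b, of "a - b"] scalar_prod_minus_distrib[OF a a b]
    scalar_prod_minus_distrib[OF b a b] comm_scalar_prod[OF a b] a b
  by (simp add: algebra_simps)

lemma hcat_mult_append_vec:
  assumes A1: "A1 \<in> carrier_mat m n1" and A2: "A2 \<in> carrier_mat m n2"
    and a: "a \<in> carrier_vec n1" and b: "b \<in> carrier_vec n2"
  shows "hcat A1 A2 *\<^sub>v (a @\<^sub>v b) = A1 *\<^sub>v a + A2 *\<^sub>v b"
proof (rule eq_vecI)
  fix i assume "i < dim_vec (A1 *\<^sub>v a + A2 *\<^sub>v b)"
  then have i: "i < m" using A1 A2 by simp
  have "row (hcat A1 A2) i = row A1 i @\<^sub>v row A2 i"
    using A1 A2 i by (intro eq_vecI) (auto simp: hcat_def)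
  then show "(hcat A1 A2 *\<^sub>v (a @\<^sub>v b)) $ i = (A1 *\<^sub>v a + A2 *\<^sub>v b) $ i"
    using scalar_prod_append[of "row A1 i" n1 "row A2 i" n2 a b] A1 A2 a b i
    by (simp add: hcat_def)
qed (use A1 A2 in \<open>auto simp: hcat_def\<close>)

lemma orthonormal_cols_preserve_scalar_prod_self:
  fixes A :: "real mat"
  assumes A: "A \<in> carrier_mat m n" and orth: "transpose_mat A * A = 1\<^sub>m n"
    and v: "v \<in> carrier_vec n"
  shows "(A *\<^sub>v v) \<bullet> (A *\<^sub>v v) = v \<bullet> v"
proof -
  have "(A *\<^sub>v v) \<bullet> (A *\<^sub>v v) = (transpose_mat A *\<^sub>v (A *\<^sub>v v)) \<bullet> v"
    using transpose_vec_mult_scalar[OF A v, of "A *\<^sub>v v"] A v by simp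
  also have "transpose_mat A *\<^sub>v (A *\<^sub>v v) = v"
    using assoc_mult_mat_vec[of "transpose_mat A" n m A n v] A v orth by simp
  finally show ?thesis .
qed

(* For an eigenvector v with eigenvalue t, A1 C^T v is the orthogonal projection of A2 v onto
   the range of A1 and |A2 v - A1 C^T v|^2 = (1 - t) |v|^2, so t >= 1 would make (- C^T v, v)
   a nonzero kernel vector of [A1 A2]. *)
lemma cross_gram_eigenvalue_lt_1:
  fixes A1 A2 :: "real mat"
  assumes A1: "A1 \<in> carrier_mat m n1" and A2: "A2 \<in> carrier_mat m n2"
    and rank: "full_column_rank (hcat A1 A2)"
    and orth1: "transpose_mat A1 * A1 = 1\<^sub>m n1"
    and orth2: "transpose_mat A2 * A2 = 1\<^sub>m n2"
    and ev: "eigenvalue (transpose_mat A2 * A1 * transpose_mat (transpose_mat A2 * A1)) t"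
  shows "t < 1"
proof (rule ccontr)
  assume "\<not> t < 1"
  define C where "C = transpose_mat A2 * A1"
  have C: "C \<in> carrier_mat n2 n1" using A1 A2 unfolding C_def by simp
  have Ct: "transpose_mat C = transpose_mat A1 * A2"
    using transpose_mult[of "transpose_mat A2" n2 m A1 n1] A1 A2 unfolding C_def by simp
  obtain v where v: "v \<in> carrier_vec n2" "v \<noteq> 0\<^sub>v n2"
    and eq: "(C * transpose_mat C) *\<^sub>v v = t \<cdot>\<^sub>v v"
    using ev C unfolding eigenvalue_def eigenvector_def C_def[symmetric] by auto
  define u w where "u = transpose_mat C *\<^sub>v v" and "w = A2 *\<^sub>v v"
  have u: "u \<in> carrier_vec n1" and w: "w \<in> carrier_vec m"
    using C A2 v unfolding u_def w_def by auto
  have u_eq: "u = transpose_mat A1 *\<^sub>v w"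
    using Ct A1 A2 v unfolding u_def w_def by simp
  have "u \<bullet> u = v \<bullet> (C *\<^sub>v u)"
    using transpose_vec_mult_scalar[OF C u v(1)] unfolding u_def .
  also have "C *\<^sub>v u = t \<cdot>\<^sub>v v" using eq C v unfolding u_def by simp
  finally have uu: "u \<bullet> u = t * (v \<bullet> v)" using v by simp
  have wp: "w \<bullet> (A1 *\<^sub>v u) = u \<bullet> u"
    using transpose_vec_mult_scalar[OF A1 u w] unfolding u_eq by simp
  have "(w - A1 *\<^sub>v u) \<bullet> (w - A1 *\<^sub>v u) = v \<bullet> v - u \<bullet> u"
    using scalar_prod_minus_self[OF w, of "A1 *\<^sub>v u"] A1 u wp
      orthonormal_cols_preserve_scalar_prod_self[OF A1 orth1 u]
      orthonormal_cols_preserve_scalar_prod_self[OF A2 orth2 v(1)]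
    unfolding w_def by simp
  also have "\<dots> \<le> 0"
    using uu \<open>\<not> t < 1\<close> conjugate_square_ge_0_vec[of v] by (simp add: mult_le_cancel_right1)
  finally have "w - A1 *\<^sub>v u = 0\<^sub>v m"
    using conjugate_square_ge_0_vec[of "w - A1 *\<^sub>v u"] A1 u w
    by (intro real_scalar_prod_self_eq_0) auto
  moreover have "hcat A1 A2 *\<^sub>v ((- u) @\<^sub>v v) = w - A1 *\<^sub>v u"
    using hcat_mult_append_vec[OF A1 A2 _ v(1), of "- u"] A1 A2 u v(1)
    unfolding w_def by (auto intro!: eq_vecI simp: scalar_prod_uminus_right)
  ultimately have "(- u) @\<^sub>v v = 0\<^sub>v (n1 + n2)"
    using rank A1 A2 u v unfolding full_column_rank_def by (simp add: hcat_def)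
  with append_vec_eq_0_iff[of "- u" n1 v n2] u v show False by simp
qed

section \<open>Eigenvalues of the iteration matrix\<close>

(* M(w, w) over an arbitrary field, so that it can be taken over the complex numbers. *)
definition gd_iter_mat :: "'a :: field mat \<Rightarrow> 'a \<Rightarrow> 'a mat" where
  "gd_iter_mat K w = four_block_mat
     ((1 - w) \<cdot>\<^sub>m 1\<^sub>m (dim_col K))   ((- w) \<cdot>\<^sub>m transpose_mat K)
     ((- (w * (1 - w))) \<cdot>\<^sub>m K)     ((1 - w) \<cdot>\<^sub>m 1\<^sub>m (dim_row K) + (w * w) \<cdot>\<^sub>m (K * transpose_mat K))"

lemma gd_iter_mat_carrier:
  "K \<in> carrier_mat n2 n1 \<Longrightarrow> gd_iter_mat K w \<in> carrier_mat (n1 + n2) (n1 + n2)"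
  unfolding gd_iter_mat_def by (rule four_block_carrier_mat) auto

lemma of_real_iterM:
  fixes C :: "real mat"
  assumes C: "C \<in> carrier_mat n2 n1"
  shows "map_mat cr (iterM C a a) = gd_iter_mat (map_mat cr C) (cr a)"
proof -
  have "map_mat cr (iterM C a a) = four_block_mat
     (map_mat cr ((1 - a) \<cdot>\<^sub>m 1\<^sub>m n1)) (map_mat cr (- a \<cdot>\<^sub>m transpose_mat C))
     (map_mat cr (- (a * (1 - a)) \<cdot>\<^sub>m C))
     (map_mat cr ((1 - a) \<cdot>\<^sub>m 1\<^sub>m n2 + (a * a) \<cdot>\<^sub>m (C * transpose_mat C)))"
    unfolding iterM_def Let_def using C by (subst map_four_block_mat[of _ n1 n1 _ n2 _ n2]) auto
  also have "\<dots> = gd_iter_mat (map_mat cr C) (cr a)"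
    unfolding gd_iter_mat_def of_real_mult_transpose[OF C, symmetric] using C
    by (intro cong[OF cong[OF cong[OF arg_cong[where f = four_block_mat]]]]) (auto intro!: eq_matI)
  finally show ?thesis .
qed

lemma smult_mat_mult_vec:
  fixes k :: "'a :: comm_ring_1"
  assumes "A \<in> carrier_mat nr nc" and "v \<in> carrier_vec nc"
  shows "(k \<cdot>\<^sub>m A) *\<^sub>v v = k \<cdot>\<^sub>v (A *\<^sub>v v)"
  using assms by (intro eq_vecI) (auto simp: scalar_prod_def sum_distrib_left ac_simps)

lemma smult_append_vec: "a \<cdot>\<^sub>v (x @\<^sub>v y) = (a \<cdot>\<^sub>v x) @\<^sub>v (a \<cdot>\<^sub>v y)"
  by (intro eq_vecI) auto

lemma gd_iter_mat_mult_append_vec: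
  assumes K: "K \<in> carrier_mat n2 n1" and x: "x \<in> carrier_vec n1" and y: "y \<in> carrier_vec n2"
  shows "gd_iter_mat K w *\<^sub>v (x @\<^sub>v y) =
    ((1 - w) \<cdot>\<^sub>v x + (- w) \<cdot>\<^sub>v (transpose_mat K *\<^sub>v y)) @\<^sub>v
    ((- (w * (1 - w))) \<cdot>\<^sub>v (K *\<^sub>v x) + ((1 - w) \<cdot>\<^sub>v y + (w * w) \<cdot>\<^sub>v (K *\<^sub>v (transpose_mat K *\<^sub>v y))))"
proof -
  have Kt: "transpose_mat K \<in> carrier_mat n1 n2" and KKt: "K * transpose_mat K \<in> carrier_mat n2 n2"
    using K by auto
  have "gd_iter_mat K w *\<^sub>v (x @\<^sub>v y) =
     (((1 - w) \<cdot>\<^sub>m 1\<^sub>m n1) *\<^sub>v x + ((- w) \<cdot>\<^sub>m transpose_mat K) *\<^sub>v y) @\<^sub>v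
     (((- (w * (1 - w))) \<cdot>\<^sub>m K) *\<^sub>v x + ((1 - w) \<cdot>\<^sub>m 1\<^sub>m n2 + (w * w) \<cdot>\<^sub>m (K * transpose_mat K)) *\<^sub>v y)"
    unfolding gd_iter_mat_def using K x y by (subst four_block_mat_mult_vec[of _ n1 n1 _ n2 _ n2]) auto
  also have "((1 - w) \<cdot>\<^sub>m 1\<^sub>m n2 + (w * w) \<cdot>\<^sub>m (K * transpose_mat K)) *\<^sub>v y
     = ((1 - w) \<cdot>\<^sub>m 1\<^sub>m n2) *\<^sub>v y + ((w * w) \<cdot>\<^sub>m (K * transpose_mat K)) *\<^sub>v y"
    using KKt y by (intro add_mult_distrib_mat_vec) auto
  finally show ?thesis
    using K Kt KKt x y by (simp add: smult_mat_mult_vec smult_mat_mult_vec[OF one_carrier_mat])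
qed

lemma eigenvalue_gd_iter_mat_of_root:
  fixes K :: "'a :: field mat"
  assumes K: "K \<in> carrier_mat n2 n1" and v: "v \<in> carrier_vec n2" "v \<noteq> 0\<^sub>v n2"
    and Kv: "K *\<^sub>v (transpose_mat K *\<^sub>v v) = l \<cdot>\<^sub>v v"
    and root: "(lam + w - 1)^2 = w^2 * lam * l" and nz: "lam + w - 1 \<noteq> 0"
  shows "eigenvalue (gd_iter_mat K w) lam"
proof -
  define d where "d = lam + w - 1"
  define u where "u = transpose_mat K *\<^sub>v v"
  define x where "x = (- w / d) \<cdot>\<^sub>v u"
  have u: "u \<in> carrier_vec n1" and x: "x \<in> carrier_vec n1" using K v unfolding u_def x_def by auto
  have Ku: "K *\<^sub>v u = l \<cdot>\<^sub>v v" using Kv unfolding u_def .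
  have Kx: "K *\<^sub>v x = ((- w / d) * l) \<cdot>\<^sub>v v"
    using mult_mat_vec[OF K u, of "- w / d"] Kv unfolding x_def u_def by (simp add: smult_smult_assoc)
  have first: "(1 - w) \<cdot>\<^sub>v x + (- w) \<cdot>\<^sub>v u = lam \<cdot>\<^sub>v x"
    using nz u unfolding x_def d_def by (intro eq_vecI) (auto simp: field_simps)
  have lam: "- (w * (1 - w)) * (- w / d * l) + (1 - w) + w * w * l = lam"
    using nz root unfolding d_def by (simp add: field_simps power2_eq_square) algebra
  have second: "(- (w * (1 - w))) \<cdot>\<^sub>v (K *\<^sub>v x) + ((1 - w) \<cdot>\<^sub>v v + (w * w) \<cdot>\<^sub>v (l \<cdot>\<^sub>v v))
      = lam \<cdot>\<^sub>v v"
    unfolding Kx using v by (intro eq_vecI) (auto simp: lam[symmetric] algebra_simps)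
  have "gd_iter_mat K w *\<^sub>v (x @\<^sub>v v) = lam \<cdot>\<^sub>v (x @\<^sub>v v)"
    using gd_iter_mat_mult_append_vec[OF K x v(1), of w] first second
    unfolding u_def[symmetric] Ku smult_append_vec by simp
  moreover have "x @\<^sub>v v \<noteq> 0\<^sub>v (n1 + n2)" using append_vec_eq_0_iff[OF x v(1)] v(2) by simp
  ultimately show ?thesis
    using gd_iter_mat_carrier[OF K, of w] x v unfolding eigenvalue_def eigenvector_def
    by (intro exI[of _ "x @\<^sub>v v"]) auto
qed

lemma gd_iter_mat_eigenvector_blocks:
  fixes K :: "'a :: field mat"
  assumes K: "K \<in> carrier_mat n2 n1" and w: "w \<noteq> 0"
    and x: "x \<in> carrier_vec n1" and y: "y \<in> carrier_vec n2"
    and eq: "gd_iter_mat K w *\<^sub>v (x @\<^sub>v y) = lam \<cdot>\<^sub>v (x @\<^sub>v y)"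
  shows "transpose_mat K *\<^sub>v y = ((1 - w - lam) / w) \<cdot>\<^sub>v x"
    and "(lam + w - 1) \<cdot>\<^sub>v y = (- (w * lam)) \<cdot>\<^sub>v (K *\<^sub>v x)"
proof -
  from eq[unfolded gd_iter_mat_mult_append_vec[OF K x y] smult_append_vec]
  have E1: "(1 - w) \<cdot>\<^sub>v x + (- w) \<cdot>\<^sub>v (transpose_mat K *\<^sub>v y) = lam \<cdot>\<^sub>v x"
    and E2: "(- (w * (1 - w))) \<cdot>\<^sub>v (K *\<^sub>v x) + ((1 - w) \<cdot>\<^sub>v y
      + (w * w) \<cdot>\<^sub>v (K *\<^sub>v (transpose_mat K *\<^sub>v y))) = lam \<cdot>\<^sub>v y"
    using x y K by (subst (asm) append_vec_eq[of _ n1]; simp)+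
  show Kty: "transpose_mat K *\<^sub>v y = ((1 - w - lam) / w) \<cdot>\<^sub>v x"
  proof (rule eq_vecI)
    fix i assume "i < dim_vec (((1 - w - lam) / w) \<cdot>\<^sub>v x)"
    then show "(transpose_mat K *\<^sub>v y) $ i = (((1 - w - lam) / w) \<cdot>\<^sub>v x) $ i"
      using arg_cong[OF E1, of "\<lambda>v. v $ i"] x y K w by (simp add: field_simps)
  qed (use x K in auto)
  show "(lam + w - 1) \<cdot>\<^sub>v y = (- (w * lam)) \<cdot>\<^sub>v (K *\<^sub>v x)"
  proof (rule eq_vecI)
    fix i assume "i < dim_vec ((- (w * lam)) \<cdot>\<^sub>v (K *\<^sub>v x))"
    then have i: "i < n2" using K by simp
    have "w * ((lam + w - 1) * y $ i) = w * (- (w * lam) * (K *\<^sub>v x) $ i)"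
      using arg_cong[OF E2[unfolded Kty mult_mat_vec[OF K x]], of "\<lambda>v. v $ i"] x y K w i
      by (simp add: field_simps) algebra
    then have "(lam + w - 1) * y $ i = - (w * lam) * (K *\<^sub>v x) $ i"
      by (rule mult_left_cancel[OF w, THEN iffD1])
    then show "((lam + w - 1) \<cdot>\<^sub>v y) $ i = ((- (w * lam)) \<cdot>\<^sub>v (K *\<^sub>v x)) $ i"
      using i y K by simp
  qed (use y K in auto)
qed

lemma eigenvalue_gd_iter_mat_cases:
  fixes K :: "'a :: field mat"
  assumes K: "K \<in> carrier_mat n2 n1" and w: "w \<noteq> 0"
    and ev: "eigenvalue (gd_iter_mat K w) lam"
  shows "lam = 1 - w \<or> lam = 0 \<or>
    (\<exists>t. eigenvalue (transpose_mat K * K) t \<and> (lam + w - 1)^2 = w^2 * lam * t)"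
proof -
  obtain z where z: "z \<in> carrier_vec (n1 + n2)" "z \<noteq> 0\<^sub>v (n1 + n2)"
    and eq: "gd_iter_mat K w *\<^sub>v z = lam \<cdot>\<^sub>v z"
    using ev gd_iter_mat_carrier[OF K, of w] unfolding eigenvalue_def eigenvector_def by auto
  define x y where "x = vec_first z n1" and "y = vec_last z n2"
  have x: "x \<in> carrier_vec n1" and y: "y \<in> carrier_vec n2" and zxy: "z = x @\<^sub>v y"
    using z unfolding x_def y_def by auto
  note blocks = gd_iter_mat_eigenvector_blocks[OF K w x y eq[unfolded zxy]]
  define d where "d = lam + w - 1"
  show ?thesis
  proof (cases "x = 0\<^sub>v n1")
    case True
    have "d \<cdot>\<^sub>v y = (- (w * lam)) \<cdot>\<^sub>v (K *\<^sub>v x)" using blocks(2) unfolding d_def .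
    also have "K *\<^sub>v x = 0\<^sub>v n2" using True K by (intro eq_vecI) auto
    also have "(- (w * lam)) \<cdot>\<^sub>v 0\<^sub>v n2 = 0\<^sub>v n2" by (intro eq_vecI) auto
    finally have "d \<cdot>\<^sub>v y = 0\<^sub>v n2" .
    moreover have "y \<noteq> 0\<^sub>v n2" using z True unfolding zxy append_vec_eq_0_iff[OF x y] by simp
    ultimately have "lam + w - 1 = 0" using smult_vec_eq_0_iff[OF y] unfolding d_def by blast
    then show ?thesis by (simp add: diff_eq_eq eq_diff_eq)
  next
    case False
    show ?thesis
    proof (cases "lam = 0")
      case lam: False
      have "(transpose_mat K * K) *\<^sub>v x = (d * d / (w * w * lam)) \<cdot>\<^sub>v x"
      proof (rule eq_vecI)
        fix i assume "i < dim_vec ((d * d / (w * w * lam)) \<cdot>\<^sub>v x)"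
        then have i: "i < n1" using x by simp
        have "- (w * lam) * ((transpose_mat K * K) *\<^sub>v x) $ i = d * ((1 - w - lam) / w * x $ i)"
          using arg_cong[OF blocks(2), of "\<lambda>v. (transpose_mat K *\<^sub>v v) $ i"] blocks(1) i x y K
          unfolding d_def by (simp add: mult_mat_vec)
        then show "((transpose_mat K * K) *\<^sub>v x) $ i = ((d * d / (w * w * lam)) \<cdot>\<^sub>v x) $ i"
          using i x w lam unfolding d_def by (simp add: field_simps)
      qed (use x K in auto)
      then have "eigenvalue (transpose_mat K * K) (d * d / (w * w * lam))"
        using x False K unfolding eigenvalue_def eigenvector_def by (intro exI[of _ x]) auto
      moreover have "(lam + w - 1)^2 = w^2 * lam * (d * d / (w * w * lam))"
        using w lam unfolding d_def by (simp add: field_simps power2_eq_square)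
      ultimately show ?thesis by blast
    qed simp
  qed
qed

section \<open>Roots of the characteristic quadratic\<close>

lemma cmod_root_real_quadratic:
  fixes z :: complex and p c :: real
  assumes root: "z^2 + cr p * z + cr c = 0" and disc: "p^2 \<le> 4 * c"
  shows "cmod z = sqrt c"
proof -
  define a b where "a = Re z" and "b = Im z"
  have re: "a^2 - b^2 + p * a + c = 0" and im: "b * (2 * a + p) = 0"
    using arg_cong[OF root, of Re] arg_cong[OF root, of Im]
    by (simp_all add: a_def b_def power2_eq_square algebra_simps)
  \<comment> \<open>a root is either non-real with real part - p / 2, or a double real root\<close>
  have "2 * a + p = 0"
  proof (cases "b = 0")
    case True
    then have "(2 * a + p)^2 = p^2 - 4 * c" using re by (simp add: power2_eq_square algebra_simps)
    then have "(2 * a + p)^2 \<le> 0" using disc by simp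
    then show ?thesis by simp
  qed (use im in simp)
  then have "a^2 + b^2 = c"
    using re by (simp add: eq_neg_iff_add_eq_0[symmetric] power2_eq_square algebra_simps)
  then show ?thesis by (simp add: cmod_def a_def b_def)
qed

lemma gd_root_cmod:
  fixes lam :: complex and g r :: real
  assumes root: "(lam + cr g - 1)^2 = (cr g)^2 * lam * cr r"
    and g: "1 \<le> g" and r: "0 \<le> r" and small: "g^2 * r \<le> 4 * (g - 1)"
  shows "cmod lam = g - 1"
proof -
  have quadratic: "lam^2 + cr (2 * (g - 1) - g^2 * r) * lam + cr ((g - 1)^2) = 0"
    using root by (simp add: algebra_simps power2_eq_square)
  have "4 * (g - 1)^2 - (2 * (g - 1) - g^2 * r)^2 = g^2 * r * (4 * (g - 1) - g^2 * r)"
    by (simp add: algebra_simps power2_eq_square)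
  moreover have "0 \<le> g^2 * r * (4 * (g - 1) - g^2 * r)"
    using r small by (intro mult_nonneg_nonneg) auto
  ultimately have "(2 * (g - 1) - g^2 * r)^2 \<le> 4 * (g - 1)^2" by linarith
  from cmod_root_real_quadratic[OF quadratic this] show ?thesis using g by simp
qed

lemma complex_quadratic_roots:
  fixes p c :: complex
  defines "s \<equiv> csqrt (p^2 - 4 * c)"
  shows "((- p + s) / 2)^2 + p * ((- p + s) / 2) + c = 0"
    and "((- p - s) / 2)^2 + p * ((- p - s) / 2) + c = 0"
    and "((- p + s) / 2) * ((- p - s) / 2) = c"
proof -
  have ss: "s^2 = p^2 - 4 * c" unfolding s_def by simp
  have "4 * (((- p + s) / 2)^2 + p * ((- p + s) / 2) + c) = s^2 - (p^2 - 4 * c)"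
    by (simp add: power2_eq_square field_simps)
  also have "\<dots> = 0" using ss by simp
  finally show "((- p + s) / 2)^2 + p * ((- p + s) / 2) + c = 0" by (metis mult_eq_0_iff zero_neq_numeral)
  have "4 * (((- p - s) / 2)^2 + p * ((- p - s) / 2) + c) = s^2 - (p^2 - 4 * c)"
    by (simp add: power2_eq_square field_simps)
  also have "\<dots> = 0" using ss by simp
  finally show "((- p - s) / 2)^2 + p * ((- p - s) / 2) + c = 0" by (metis mult_eq_0_iff zero_neq_numeral)
  have "4 * (((- p + s) / 2) * ((- p - s) / 2)) = 4 * c - (s^2 - (p^2 - 4 * c))"
    by (simp add: power2_eq_square field_simps)
  also have "\<dots> = 4 * c" using ss by simp
  finally show "((- p + s) / 2) * ((- p - s) / 2) = c" by simp
qed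

lemma quadratic_larger_root_ge:
  fixes p c x :: real
  assumes disc: "4 * c \<le> p^2" and "x \<le> - p / 2 \<or> x^2 + p * x + c \<le> 0"
  shows "x \<le> (- p + sqrt (p^2 - 4 * c)) / 2"
proof -
  have "2 * x + p \<le> sqrt (p^2 - 4 * c)"
    using assms(2)
  proof
    assume "x^2 + p * x + c \<le> 0"
    then have "(2 * x + p)^2 \<le> p^2 - 4 * c" by (simp add: power2_eq_square algebra_simps)
    then have "\<bar>2 * x + p\<bar> \<le> sqrt (p^2 - 4 * c)" using real_sqrt_le_mono by fastforce
    then show ?thesis by simp
  next
    assume "x \<le> - p / 2"
    moreover have "0 \<le> sqrt (p^2 - 4 * c)" using disc by simp
    ultimately show ?thesis by linarith
  qed
  then show ?thesis by (simp add: field_simps)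
qed

lemma opt_step_quadratic_discriminant:
  fixes g l w :: real
  assumes g1: "1 < g" and g2: "g < 2" and gl: "g^2 * l = 4 * (g - 1)"
    and w: "0 < w" "w \<le> g"
  shows "4 * (w - 1)^2 \<le> (2 * (w - 1) - w^2 * l)^2"
proof -
  have "0 < g^2 * l" using gl g1 by simp
  then have "l > 0" by (simp add: zero_less_mult_iff)
  have "(g - 1) * w \<le> (g - 1) * g" using w g1 by (intro mult_left_mono) auto
  moreover have "g * (g - 2) < 0" using g1 g2 by (simp add: mult_pos_neg)
  ultimately have "0 \<le> g - (g - 1) * w" by (simp add: algebra_simps)
  then have "0 \<le> 4 * w^2 * l * ((g - w) * (g - (g - 1) * w))"
    using \<open>l > 0\<close> w by (intro mult_nonneg_nonneg) auto
  also have "4 * w^2 * l * ((g - w) * (g - (g - 1) * w))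
      = w^2 * l * (w^2 * (4 * (g - 1)) - 4 * g^2 * (w - 1))"
    by (simp add: algebra_simps power2_eq_square)
  also have "\<dots> = g^2 * ((2 * (w - 1) - w^2 * l)^2 - 4 * (w - 1)^2)"
    unfolding gl[symmetric] by (simp add: algebra_simps power2_eq_square)
  finally show ?thesis using g1 by (simp add: zero_le_mult_iff)
qed

lemma opt_step_quadratic_at_g_minus_1:
  fixes g l w :: real
  assumes g1: "1 < g" and g2: "g < 2" and gl: "g^2 * l = 4 * (g - 1)"
    and w: "0 < w" "w \<le> g"
  defines "p \<equiv> 2 * (w - 1) - w^2 * l"
  shows "g - 1 \<le> - p / 2 \<or> (g - 1)^2 + p * (g - 1) + (w - 1)^2 \<le> 0"
proof (cases "g - 1 \<le> - p / 2")
  case False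
  then have "g^2 * (- p - 2 * (g - 1)) < 0" using g1 by (simp add: mult_pos_neg)
  also have "g^2 * (- p - 2 * (g - 1)) = w^2 * (4 * (g - 1)) - 2 * g^2 * (w - 1) - 2 * g^2 * (g - 1)"
    unfolding p_def gl[symmetric] by (simp add: algebra_simps power2_eq_square)
  also have "\<dots> = 2 * (w - g) * (2 * (g - 1) * w - g * (2 - g))"
    by (simp add: algebra_simps power2_eq_square)
  finally have "w < g" and pos: "2 * (g - 1) * w - g * (2 - g) > 0"
    using w by (auto simp: mult_less_0_iff)
  have "g^2 * ((g - 1)^2 + p * (g - 1) + (w - 1)^2)
      = g^2 * (g - 1)^2 + 2 * g^2 * (w - 1) * (g - 1) - w^2 * (g - 1) * (4 * (g - 1)) + g^2 * (w - 1)^2"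
    unfolding p_def gl[symmetric] by (simp add: algebra_simps power2_eq_square)
  also have "\<dots> = (g - w) * (g - 2) * ((2 * (g - 1) * w - g * (2 - g)) + g * w)"
    by (simp add: algebra_simps power2_eq_square)
  also have "\<dots> < 0"
  proof (rule mult_neg_pos[OF mult_pos_neg])
    have "0 < g * w" using g1 w by simp
    then show "0 < 2 * (g - 1) * w - g * (2 - g) + g * w" using pos by linarith
  qed (use \<open>w < g\<close> g2 in auto)
  finally show ?thesis by (simp add: mult_less_0_iff)
qed simp

lemma gd_quadratic_root_ge:
  fixes g l w :: real
  assumes g1: "1 < g" and g2: "g < 2" and gl: "g^2 * l = 4 * (g - 1)" and w: "0 < w"
  shows "\<exists>lam. (lam + cr w - 1)^2 = (cr w)^2 * lam * cr l \<and> lam + cr w - 1 \<noteq> 0 \<and> g - 1 \<le> cmod lam"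
proof -
  define p c where "p = 2 * (w - 1) - w^2 * l" and "c = (w - 1)^2"
  have quadratic: "(lam + cr w - 1)^2 = (cr w)^2 * lam * cr l \<longleftrightarrow> lam^2 + cr p * lam + cr c = 0"
    for lam unfolding p_def c_def by (simp add: algebra_simps power2_eq_square)
  define s where "s = csqrt ((cr p)^2 - 4 * cr c)"
  define z1 z2 where "z1 = (- cr p + s) / 2" and "z2 = (- cr p - s) / 2"
  note roots = complex_quadratic_roots[of "cr p" "cr c", folded s_def z1_def z2_def]
  have "\<exists>lam \<in> {z1, z2}. g - 1 \<le> cmod lam"
  proof (cases "w \<le> g")
    case True
    have disc: "4 * c \<le> p^2"
      using opt_step_quadratic_discriminant[OF g1 g2 gl w True] unfolding p_def c_def .
    have s_real: "s = cr (sqrt (p^2 - 4 * c))"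
      using csqrt_of_real[of "p^2 - 4 * c"] disc unfolding s_def by (simp add: c_def)
    define r where "r = (- p + sqrt (p^2 - 4 * c)) / 2"
    have "z1 = cr r" unfolding z1_def r_def s_real by simp
    moreover have "g - 1 \<le> r"
      unfolding r_def using disc opt_step_quadratic_at_g_minus_1[OF g1 g2 gl w True]
      by (intro quadratic_larger_root_ge) (auto simp: p_def c_def)
    ultimately have "g - 1 \<le> cmod z1" by simp
    then show ?thesis by blast
  next
    case False
    \<comment> \<open>the roots multiply to (w - 1)^2, so one of them has modulus at least w - 1 > g - 1\<close>
    have "cmod z1 * cmod z2 = cmod (cr c)"
      using arg_cong[OF roots(3), of cmod] by (simp only: norm_mult)
    also have "\<dots> = (w - 1)^2" by (simp only: norm_of_real) (simp add: c_def)
    finally have "cmod z1 * cmod z2 = (w - 1)^2" .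
    moreover have "(g - 1)^2 \<le> (w - 1)^2" using False g1 by (intro power_mono) auto
    ultimately have "(g - 1) * (g - 1) \<le> cmod z1 * cmod z2" by (simp add: power2_eq_square)
    then show ?thesis using mult_strict_mono'[of "cmod z1" "g - 1" "cmod z2" "g - 1"] by force
  qed
  then obtain lam where lam: "lam \<in> {z1, z2}" and big: "g - 1 \<le> cmod lam" by blast
  have root: "(lam + cr w - 1)^2 = (cr w)^2 * lam * cr l" using lam roots quadratic by auto
  moreover have "lam + cr w - 1 \<noteq> 0"
  proof
    assume "lam + cr w - 1 = 0"
    then have "(cr w)^2 * lam * cr l = 0" using root by simp
    moreover have "0 < g^2 * l" using gl g1 by simp
    then have "l > 0" by (simp add: zero_less_mult_iff)
    ultimately show False using w big g1 by auto
  qed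
  ultimately show ?thesis using big by blast
qed

lemma opt_step_facts:
  fixes l :: real
  assumes l: "0 < l" "l < 1"
  defines "g \<equiv> 2 / (1 + sqrt (1 - l))"
  shows "1 < g" and "g < 2" and "g^2 * l = 4 * (g - 1)" and "g - 1 < l"
proof -
  define s where "s = sqrt (1 - l)"
  have s: "0 < s" "s < 1" and l_s: "l = (1 - s) * (1 + s)"
    using l unfolding s_def by (auto simp: algebra_simps power2_eq_square[symmetric])
  have g_s: "g = 2 / (1 + s)" and "g - 1 = (1 - s) / (1 + s)"
    using s unfolding g_def s_def[symmetric] by (auto simp: field_simps)
  show "1 < g" "g < 2" using s unfolding g_s by (auto simp: field_simps)
  have "g^2 * l = 4 * ((1 - s) * (1 + s) / ((1 + s) * (1 + s)))"
    unfolding g_s l_s power2_eq_square by simp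
  also have "(1 - s) * (1 + s) / ((1 + s) * (1 + s)) = (1 - s) / (1 + s)"
    using s by (intro mult_divide_mult_cancel_right) simp
  finally show "g^2 * l = 4 * (g - 1)" unfolding \<open>g - 1 = _\<close> .
  have "1 < (1 + s) * (1 + s)" using s by (simp add: algebra_simps add_pos_pos)
  then have "1 / (1 + s) < 1 + s" using s by (simp add: field_simps)
  then have "(1 - s) * (1 / (1 + s)) < (1 - s) * (1 + s)" using s by (intro mult_strict_left_mono) auto
  then show "g - 1 < l" unfolding \<open>g - 1 = _\<close> l_s by simp
qed

section \<open>Spectral radius of the iteration matrix\<close>

lemma rho_iterM_ge_root:
  fixes C :: "real mat"
  assumes C: "C \<in> carrier_mat n2 n1" and ev: "eigenvalue (C * transpose_mat C) l"
    and root: "(lam + cr a - 1)^2 = (cr a)^2 * lam * cr l" and nz: "lam + cr a - 1 \<noteq> 0"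
  shows "cmod lam \<le> rho (iterM C a a)"
proof -
  define K where "K = map_mat cr C"
  have K: "K \<in> carrier_mat n2 n1" using C unfolding K_def by simp
  obtain v where "eigenvector (C * transpose_mat C) v l" using ev unfolding eigenvalue_def by blast
  then have "eigenvector (map_mat cr (C * transpose_mat C)) (map_vec cr v) (cr l)"
    using C by (intro of_real_hom.eigenvector_hom) auto
  then have v: "map_vec cr v \<in> carrier_vec n2" "map_vec cr v \<noteq> 0\<^sub>v n2"
    and Kv: "K *\<^sub>v (transpose_mat K *\<^sub>v map_vec cr v) = cr l \<cdot>\<^sub>v map_vec cr v"
    using K unfolding of_real_mult_transpose[OF C] K_def[symmetric] eigenvector_def by auto
  from eigenvalue_gd_iter_mat_of_root[OF K v Kv root nz]
  have "lam \<in> spectrum (map_mat cr (iterM C a a))"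
    unfolding of_real_iterM[OF C] K_def spectrum_def by simp
  moreover have "0 < n1 + n2" using eigenvalue_dim_pos[OF _ ev] C by simp
  moreover have "map_mat cr (iterM C a a) \<in> carrier_mat (n1 + n2) (n1 + n2)"
    unfolding of_real_iterM[OF C] using C by (intro gd_iter_mat_carrier) simp
  ultimately show ?thesis unfolding rho_def using spectral_radius_mem_max(2) by blast
qed

lemma rho_iterM_ge_opt:
  fixes C :: "real mat"
  assumes C: "C \<in> carrier_mat n2 n1" and ev: "eigenvalue (C * transpose_mat C) l"
    and g: "1 < g" "g < 2" "g^2 * l = 4 * (g - 1)" and w: "0 < w"
  shows "g - 1 \<le> rho (iterM C w w)"
proof -
  obtain lam where "(lam + cr w - 1)^2 = (cr w)^2 * lam * cr l" "lam + cr w - 1 \<noteq> 0"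
    and "g - 1 \<le> cmod lam"
    using gd_quadratic_root_ge[OF g w] by blast
  with rho_iterM_ge_root[OF C ev] show ?thesis by fastforce
qed

lemma rho_iterM_le:
  fixes C :: "real mat"
  assumes C: "C \<in> carrier_mat n2 n1" and n: "0 < n2" and g: "1 \<le> g"
    and small: "\<And>t. eigenvalue (C * transpose_mat C) t \<Longrightarrow> g^2 * t \<le> 4 * (g - 1)"
  shows "rho (iterM C g g) \<le> g - 1"
proof -
  define K where "K = map_mat cr C"
  have K: "K \<in> carrier_mat n2 n1" using C unfolding K_def by simp
  have M: "map_mat cr (iterM C g g) \<in> carrier_mat (n1 + n2) (n1 + n2)" using C by (simp add: iterM_def)
  obtain lam where "lam \<in> spectrum (map_mat cr (iterM C g g))" and rho: "rho (iterM C g g) = cmod lam"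
    using spectral_radius_mem_max(1)[OF M] n unfolding rho_def by auto
  then have ev: "eigenvalue (gd_iter_mat K (cr g)) lam"
    unfolding spectrum_def of_real_iterM[OF C] K_def by simp
  have "cr g \<noteq> 0" using g by simp
  from eigenvalue_gd_iter_mat_cases[OF K this ev] consider
      "lam = 1 - cr g" | "lam = 0"
    | t where "eigenvalue (transpose_mat K * K) t" "(lam + cr g - 1)^2 = (cr g)^2 * lam * t"
    by blast
  then have "cmod lam \<le> g - 1"
  proof cases
    case 1
    then show ?thesis using g by (simp add: norm_of_real[of "1 - g", simplified])
  next
    case 2
    then show ?thesis using g by simp
  next
    case (3 t)
    have KtK: "transpose_mat K * K = map_mat cr (transpose_mat C * transpose_mat (transpose_mat C))"
      using of_real_mult_transpose[of "transpose_mat C" n1 n2] C unfolding K_def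
      by (simp add: map_mat_transpose)
    obtain r where r: "t = cr r" "0 \<le> r"
      using gram_eigenvalue_nonneg_real[of "transpose_mat C" n1 n2 t] 3(1) C unfolding KtK by auto
    have "g^2 * r \<le> 4 * (g - 1)"
    proof (cases "r = 0")
      case False
      have "eigenvalue (K * transpose_mat K) t"
        using eigenvalue_mult_swap[of "transpose_mat K" n1 n2 K t] 3(1) K r False by simp
      then have "eigenvalue (C * transpose_mat C) r"
        using eigenvalue_of_real_mat[of "C * transpose_mat C" n2 r] C r(1)
        unfolding K_def of_real_mult_transpose[OF C] by simp
      then show ?thesis by (rule small)
    qed (use g in simp)
    then show ?thesis using gd_root_cmod[of lam g r] 3(2) r g by simp
  qed
  then show ?thesis unfolding rho .
qed

theorem mainTheorem10:
  fixes A1 A2 :: "real mat" and m n1 n2 :: nat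
  assumes "A1 \<in> carrier_mat m n1" and "A2 \<in> carrier_mat m n2"
    and "full_column_rank (hcat A1 A2)"
    and "transpose_mat A1 * A1 = 1\<^sub>m n1"
    and "transpose_mat A2 * A2 = 1\<^sub>m n2"
    and "transpose_mat A2 * A1 \<noteq> 0\<^sub>m n2 n1"
  shows "let C = transpose_mat A2 * A1;
             g = 2 / (1 + sqrt (1 - lambda_max (C * transpose_mat C)))
         in g - 1 < rho (iterM C 1 1)
            \<and> g > 0
            \<and> rho (iterM C g g) = g - 1
            \<and> (\<forall>g1 > 0. rho (iterM C g g) \<le> rho (iterM C g1 g1))"
proof -
  define C l where "C = transpose_mat A2 * A1" and "l = lambda_max (C * transpose_mat C)"
  define g where "g = 2 / (1 + sqrt (1 - l))"
  have C: "C \<in> carrier_mat n2 n1" using assms(1,2) unfolding C_def by simp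
  note l_ev = lambda_max_gram[OF C assms(6)[folded C_def], folded l_def]
  have l: "0 < l" "l < 1"
    using l_ev cross_gram_eigenvalue_lt_1[OF assms(1-5)] unfolding l_def C_def by auto
  note g = opt_step_facts[OF l, folded g_def]
  have lower: "g - 1 \<le> rho (iterM C w w)" if "0 < w" for w
    using rho_iterM_ge_opt[OF C l_ev(1) g(1-3) that] .
  have "cmod (cr l) \<le> rho (iterM C 1 1)"
    using rho_iterM_ge_root[OF C l_ev(1), of "cr l" 1] l by (simp add: power2_eq_square)
  then have part1: "g - 1 < rho (iterM C 1 1)" using g(4) l by simp
  have "rho (iterM C g g) \<le> g - 1"
  proof (rule rho_iterM_le[OF C _ less_imp_le[OF g(1)]])
    show "0 < n2" using eigenvalue_dim_pos[OF _ l_ev(1)] C by simp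
    fix t assume "eigenvalue (C * transpose_mat C) t"
    then have "g^2 * t \<le> g^2 * l" using l_ev(2) by (intro mult_left_mono) auto
    then show "g^2 * t \<le> 4 * (g - 1)" using g(3) by simp
  qed
  with lower[of g] g(1) have part3: "rho (iterM C g g) = g - 1" by simp
  show ?thesis
    using part1 part3 lower g(1) unfolding Let_def C_def[symmetric] l_def[symmetric] g_def[symmetric]
    by auto
qed

end
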